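(* Let $t_1, t_2 \in \mathcal{L}_r$ with $t_1 =_{\mathcal{L}} t_2$. Then for all finite $E \subseteq \mathcal{X}$ and $S \in \mathbb{N}$: $B(E, S)$ is one of the sublevels of $t_1$ if and only if $B(E, S)$ is one of the sublevels of $t_2$.
   Context: $\mathcal{X}$ is a countable set of variables; a valuation is $\sigma\colon\mathcal{X}\to\mathbb{N}$. For finite $E\subseteq\mathcal{X}$, $x\in\mathcal{X}$, $S\in\mathbb{N}$, the sublevels $A(E,x,S)$ and $B(E,S)$ have values $[A(E,x,S)]_\sigma = 0$ if some $y\in E$ has $\sigma(y)=0$, and $\sigma(x)+S$ otherwise; $[B(E,S)]_\sigma=0$ if some $y\in E$ has $\sigma(y)=0$, and $S$ otherwise. $\mathcal{L}_s$ is the set of sublevels $A(E,x,S)$ with $x\in E$ and $B(E,S)$ with $S>0$. $t_1\leqslant_{\mathcal{L}} t_2$ (resp. $t_1 =_{\mathcal{L}} t_2$) means $[t_1]_\sigma\le[t_2]_\sigma$ (resp. $=$) for every valuation $\sigma$; $\max$ of a finite family is evaluated pointwise (empty max has value $0$). Two sublevels $u,v$ are incomparable if neither $u\leqslant_{\mathcal{L}} v$ nor $v\leqslant_{\mathcal{L}} u$. A minimal representation is a formal expression $\max(u_1,\ldots,u_n)$ where $\{u_1,\ldots,u_n\}$ is a finite set of elements of $\mathcal{L}_s$ that are pairwise incomparable; $\mathcal{L}_r$ is the set of minimal representations, and the $u_i$ are called its sublevels. *)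

theory Defs
  imports Main "HOL-Library.Countable"
begin

text \<open>Sublevels over a countable set of variables 'v.
  SA E x S stands for A(E,x,S), SB E S stands for B(E,S).\<close>

datatype 'v sublevel = SA "'v set" 'v nat | SB "'v set" nat

type_synonym 'v valuation = "'v \<Rightarrow> nat"

fun sval :: "'v sublevel \<Rightarrow> 'v valuation \<Rightarrow> nat" where
  "sval (SA E x S) \<sigma> = (if \<exists>y\<in>E. \<sigma> y = 0 then 0 else \<sigma> x + S)"
| "sval (SB E S) \<sigma> = (if \<exists>y\<in>E. \<sigma> y = 0 then 0 else S)"

fun in_Ls :: "'v sublevel \<Rightarrow> bool" where
  "in_Ls (SA E x S) = (finite E \<and> x \<in> E)"
| "in_Ls (SB E S) = (finite E \<and> S > 0)"

definition sub_le :: "'v sublevel \<Rightarrow> 'v sublevel \<Rightarrow> bool" where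
  "sub_le u v = (\<forall>\<sigma>. sval u \<sigma> \<le> sval v \<sigma>)"

definition incomparable :: "'v sublevel \<Rightarrow> 'v sublevel \<Rightarrow> bool" where
  "incomparable u v = (\<not> sub_le u v \<and> \<not> sub_le v u)"

text \<open>A minimal representation max(u_1,...,u_n) is identified with its finite set of sublevels.\<close>
definition in_Lr :: "'v sublevel set \<Rightarrow> bool" where
  "in_Lr U = (finite U \<and> (\<forall>u\<in>U. in_Ls u) \<and>
              (\<forall>u\<in>U. \<forall>v\<in>U. u \<noteq> v \<longrightarrow> incomparable u v))"

definition rval :: "'v sublevel set \<Rightarrow> 'v valuation \<Rightarrow> nat" where
  "rval U \<sigma> = Max (insert 0 ((\<lambda>u. sval u \<sigma>) ` U))"

definition eq_L :: "'v sublevel set \<Rightarrow> 'v sublevel set \<Rightarrow> bool" where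
  "eq_L U V = (\<forall>\<sigma>. rval U \<sigma> = rval V \<sigma>)"

end

theory Submission
  imports Defs
begin

text \<open>The valuation \<open>1\<^bsub>E\<^esub>\<close>, equal to 1 on E and 0 elsewhere, detects B(E,S): a sublevel lies
  above B(E,S) iff its value at \<open>1\<^bsub>E\<^esub>\<close> is at least S. Hence in a minimal representation
  containing B(E,S) every other sublevel is below S at \<open>1\<^bsub>E\<^esub>\<close>, and the maximum there is S.
  If t2 has the same values, some sublevel u of t2 attains S at \<open>1\<^bsub>E\<^esub>\<close>, so its set is some
  \<open>E' \<subseteq> E\<close>. Evaluating at \<open>2 \<cdot> 1\<^bsub>E'\<^esub>\<close> shows that u is not an A-sublevel (t1 stays
  below S + 1 there), and evaluating at \<open>1\<^bsub>E'\<^esub>\<close> and using minimality of t1 gives E' = E.\<close>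

definition const_on :: "'v set \<Rightarrow> nat \<Rightarrow> 'v valuation" where
  "const_on F c = (\<lambda>y. if y \<in> F then c else 0)"

lemma const_on_mono: "F \<subseteq> G \<Longrightarrow> c \<le> d \<Longrightarrow> const_on F c \<le> const_on G d"
  by (auto simp: const_on_def le_fun_def)

lemma sval_SA_const_on:
  "0 < c \<Longrightarrow> x \<in> E \<Longrightarrow> sval (SA E x S) (const_on F c) = (if E \<subseteq> F then c + S else 0)"
  by (auto simp: const_on_def)

lemma sval_SB_const_on:
  "0 < c \<Longrightarrow> sval (SB E S) (const_on F c) = (if E \<subseteq> F then S else 0)"
  by (auto simp: const_on_def)

lemma sval_mono: "\<sigma> \<le> \<tau> \<Longrightarrow> sval u \<sigma> \<le> sval u \<tau>"
proof -
  assume le: "\<sigma> \<le> \<tau>"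
  then have "\<tau> y = 0 \<Longrightarrow> \<sigma> y = 0" for y
    by (metis le0 le_antisym le_fun_def)
  with le show ?thesis
    by (cases u) (auto simp: le_fun_def)
qed

declare sval.simps [simp del]

lemma sval_const_on_2_le: "in_Ls u \<Longrightarrow> sval u (const_on F 2) \<le> sval u (const_on F 1) + 1"
  by (cases u) (simp_all add: sval_SA_const_on sval_SB_const_on)

lemma sval_SB_le: "sval (SB E S) \<sigma> \<le> S"
  by (simp add: sval.simps)

lemma SB_sub_le_iff:
  assumes "in_Ls u"
  shows "sub_le (SB E S) u \<longleftrightarrow> S \<le> sval u (const_on E 1)"
proof
  assume "sub_le (SB E S) u"
  then show "S \<le> sval u (const_on E 1)"
    unfolding sub_le_def by (metis sval_SB_const_on subset_refl zero_less_one)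
next
  assume le: "S \<le> sval u (const_on E 1)"
  show "sub_le (SB E S) u"
    unfolding sub_le_def
  proof
    fix \<sigma> :: "'a valuation"
    show "sval (SB E S) \<sigma> \<le> sval u \<sigma>"
    proof (cases "S = 0 \<or> (\<exists>y\<in>E. \<sigma> y = 0)")
      case True
      then show ?thesis by (auto simp: sval.simps)
    next
      case False
      show ?thesis
      proof (cases u)
        case (SA E' x S')
        with assms le False have "E' \<subseteq> E" "S \<le> 1 + S'" "x \<in> E'"
          by (auto simp: sval_SA_const_on split: if_splits)
        with False SA show ?thesis
          by (auto simp: sval.simps Suc_le_eq)
      next
        case (SB E' S')
        with le False have "E' \<subseteq> E" "S \<le> S'"
          by (auto simp: sval_SB_const_on split: if_splits)
        with False SB show ?thesis
          by (auto simp: sval.simps)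
      qed
    qed
  qed
qed

lemma sval_const_on_less_if_in_Lr:
  assumes "in_Lr t" "SB E S \<in> t" "u \<in> t" "u \<noteq> SB E S"
  shows "sval u (const_on E 1) < S"
proof -
  from assms have "in_Ls u" "\<not> sub_le (SB E S) u"
    unfolding in_Lr_def incomparable_def by blast+
  then show ?thesis
    by (simp add: SB_sub_le_iff)
qed

lemma rval_le: "finite t \<Longrightarrow> (\<And>u. u \<in> t \<Longrightarrow> sval u \<sigma> \<le> M) \<Longrightarrow> rval t \<sigma> \<le> M"
  unfolding rval_def by simp

lemma sval_le_rval: "finite t \<Longrightarrow> u \<in> t \<Longrightarrow> sval u \<sigma> \<le> rval t \<sigma>"
  unfolding rval_def by simp

lemma rval_attained: "finite t \<Longrightarrow> 0 < rval t \<sigma> \<Longrightarrow> \<exists>u\<in>t. sval u \<sigma> = rval t \<sigma>"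
  unfolding rval_def using Max_in [of "insert 0 ((\<lambda>u. sval u \<sigma>) ` t)"] by auto

lemma rval_const_on_if_SB_mem:
  assumes "in_Lr t" "SB E S \<in> t"
  shows "rval t (const_on E 1) = S"
proof (rule antisym)
  have "finite t"
    using assms(1) by (simp add: in_Lr_def)
  then show "rval t (const_on E 1) \<le> S"
    using sval_const_on_less_if_in_Lr [OF assms] sval_SB_le
    by (metis less_imp_le rval_le)
  show "S \<le> rval t (const_on E 1)"
    using sval_le_rval [OF \<open>finite t\<close> assms(2), of "const_on E 1"]
    by (simp add: sval_SB_const_on)
qed

lemma rval_less_sval_SA:
  assumes "in_Lr t" "SB E S \<in> t" "x \<in> E'" "E' \<subseteq> E" "S \<le> S' + 1"
  shows "rval t (const_on E' 2) < sval (SA E' x S') (const_on E' 2)"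
proof -
  have "rval t (const_on E' 2) \<le> S"
  proof (rule rval_le)
    show "finite t"
      using assms(1) by (simp add: in_Lr_def)
  next
    fix v assume "v \<in> t"
    show "sval v (const_on E' 2) \<le> S"
    proof (cases "v = SB E S")
      case True
      then show ?thesis by (simp add: sval_SB_le)
    next
      case False
      have "in_Ls v"
        using assms(1) \<open>v \<in> t\<close> by (simp add: in_Lr_def)
      have "sval v (const_on E' 2) \<le> sval v (const_on E 2)"
        using assms(4) by (simp add: const_on_mono sval_mono)
      also have "\<dots> \<le> sval v (const_on E 1) + 1"
        using \<open>in_Ls v\<close> by (rule sval_const_on_2_le)
      also have "\<dots> \<le> S"
        using sval_const_on_less_if_in_Lr [OF assms(1,2) \<open>v \<in> t\<close> False] by simp
      finally show ?thesis .
    qed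
  qed
  also have "S < sval (SA E' x S') (const_on E' 2)"
    using assms(3,5) by (simp add: sval_SA_const_on)
  finally show ?thesis .
qed

lemma SB_mem_if_eq_L:
  assumes t1: "in_Lr t1" and t2: "in_Lr t2" and eq: "eq_L t1 t2" and B: "SB E S \<in> t1"
  shows "SB E S \<in> t2"
proof -
  have "0 < S"
    using t1 B by (auto simp: in_Lr_def)
  have rval_eq: "rval t1 \<sigma> = rval t2 \<sigma>" for \<sigma>
    using eq by (simp add: eq_L_def)
  have fin: "finite t1" "finite t2"
    using t1 t2 by (simp_all add: in_Lr_def)
  have "rval t2 (const_on E 1) = S"
    using rval_const_on_if_SB_mem [OF t1 B] rval_eq by simp
  then obtain u where u: "u \<in> t2" "sval u (const_on E 1) = S"
    using rval_attained [OF fin(2)] \<open>0 < S\<close> by metis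
  have "in_Ls u"
    using t2 u(1) by (simp add: in_Lr_def)
  show ?thesis
  proof (cases u)
    case (SA E' x S')
    with u \<open>in_Ls u\<close> \<open>0 < S\<close> have "x \<in> E'" "E' \<subseteq> E" "S = S' + 1"
      by (auto simp: sval_SA_const_on split: if_splits)
    then have "rval t2 (const_on E' 2) < sval u (const_on E' 2)"
      using rval_less_sval_SA [OF t1 B] rval_eq SA by simp
    with sval_le_rval [OF fin(2) u(1)] show ?thesis
      by (simp add: not_le [symmetric])
  next
    case (SB E' S')
    with u \<open>0 < S\<close> have "E' \<subseteq> E" "S' = S"
      by (auto simp: sval_SB_const_on split: if_splits)
    have "rval t1 (const_on E' 1) = S"
      using rval_const_on_if_SB_mem [OF t2] u(1) SB \<open>S' = S\<close> rval_eq by metis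
    then obtain v where v: "v \<in> t1" "sval v (const_on E' 1) = S"
      using rval_attained [OF fin(1)] \<open>0 < S\<close> by metis
    have "S \<le> sval v (const_on E 1)"
      using v(2) \<open>E' \<subseteq> E\<close> by (metis const_on_mono order_refl sval_mono)
    then have "v = SB E S"
      using sval_const_on_less_if_in_Lr [OF t1 B v(1)] by force
    with v(2) \<open>0 < S\<close> have "E \<subseteq> E'"
      by (simp add: sval_SB_const_on split: if_splits)
    with \<open>E' \<subseteq> E\<close> SB \<open>S' = S\<close> u(1) show ?thesis
      by simp
  qed
qed

theorem proposition32:
  fixes t1 t2 :: "('v::countable) sublevel set"
  assumes "in_Lr t1" and "in_Lr t2" and "eq_L t1 t2"
  shows "\<forall>E S. finite E \<longrightarrow> (SB E S \<in> t1 \<longleftrightarrow> SB E S \<in> t2)"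
proof -
  have "eq_L t2 t1"
    using assms(3) by (simp add: eq_L_def)
  then show ?thesis
    using SB_mem_if_eq_L assms by blast
qed

end
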